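(* Let $(\mathcal{X},\rho)$ be a metric space, $U\subset\mathcal{X}$, and $r>0$. For any process $\mathbb{X}=(X_n)_{n\ge0}$ in $\mathcal{X}$ and any nearest neighbor process $(\tilde X_n)_{n\ge1}$, the number of $(U,r)$-separated events is bounded by the $r$-packing number of $U$: \[\sum_{n=1}^\infty\mathbb{1}\{E_n^{U,r}\text{ occurs}\}\le\mathcal{P}_r(U).\]
   Context: A nearest neighbor process is any $(\tilde X_n)_{n\ge1}$ with $\tilde X_n\in\arg\min_{x\in\{X_0,\dots,X_{n-1}\}}\rho(X_n,x)$. The $r$-separated event at time $n$ is $E_n^r=\{\rho(X_n,\tilde X_n)\ge r\}$, and the $(U,r)$-separated event is $E_n^{U,r}=E_n^r\cap\{X_n\in U\}$. A set $Z$ is an $r$-packing if $\rho(z,z')\ge r$ for all distinct $z,z'\in Z$; $\mathcal{P}_r(U)$ is the maximum size of an $r$-packing contained in $U$ (possibly $+\infty$). *)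

theory Defs
  imports "HOL-Analysis.Analysis"
begin

definition nn_process :: "(nat \<Rightarrow> 'a::metric_space) \<Rightarrow> (nat \<Rightarrow> 'a) \<Rightarrow> bool" where
  "nn_process X Xt \<longleftrightarrow>
     (\<forall>n\<ge>1. Xt n \<in> X ` {..<n} \<and> (\<forall>x\<in>X ` {..<n}. dist (X n) (Xt n) \<le> dist (X n) x))"

definition sep_event :: "(nat \<Rightarrow> 'a::metric_space) \<Rightarrow> (nat \<Rightarrow> 'a) \<Rightarrow> 'a set \<Rightarrow> real \<Rightarrow> nat \<Rightarrow> bool" where
  "sep_event X Xt U r n \<longleftrightarrow> dist (X n) (Xt n) \<ge> r \<and> X n \<in> U"

definition r_packing :: "real \<Rightarrow> 'a::metric_space set \<Rightarrow> bool" where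
  "r_packing r Z \<longleftrightarrow> (\<forall>z\<in>Z. \<forall>z'\<in>Z. z \<noteq> z' \<longrightarrow> dist z z' \<ge> r)"

definition packing_number :: "real \<Rightarrow> 'a::metric_space set \<Rightarrow> ennreal" where
  "packing_number r U =
     (SUP Z \<in> {Z. Z \<subseteq> U \<and> r_packing r Z}. if finite Z then of_nat (card Z) else \<infinity>)"

end

theory Submission
  imports Defs
begin

(* The nearest neighbour is the closest earlier point, so at a separated time the current point
   is at distance at least r from every earlier point. Hence the points of finitely many separated
   times are pairwise r-apart (in particular distinct, as r > 0) and lie in U: every partial sum
   counts the elements of a finite r-packing of U. *)

lemma finite_r_packing_le_packing_number:
  assumes "Z \<subseteq> U" "r_packing r Z" "finite Z"
  shows "of_nat (card Z) \<le> packing_number r U"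
proof -
  have "(if finite Z then of_nat (card Z) else \<infinity>) \<le> packing_number r U"
    unfolding packing_number_def by (rule SUP_upper) (use assms in auto)
  then show ?thesis
    using assms(3) by simp
qed

lemma nn_process_sep_event_dist_earlier:
  assumes "nn_process X Xt" "sep_event X Xt U r n" "m < n"
  shows "r \<le> dist (X n) (X m)"
proof -
  have "dist (X n) (Xt n) \<le> dist (X n) (X m)"
    using assms(1,3) unfolding nn_process_def by auto
  with assms(2) show ?thesis
    unfolding sep_event_def by linarith
qed

lemma nn_process_sep_event_times_dist:
  assumes "nn_process X Xt"
    and "sep_event X Xt U r m" "sep_event X Xt U r n" "m \<noteq> n"
  shows "r \<le> dist (X m) (X n)"
proof (cases "m < n")
  case True
  then show ?thesis
    using nn_process_sep_event_dist_earlier[OF assms(1,3)] by (simp add: dist_commute)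
next
  case False
  then show ?thesis
    using nn_process_sep_event_dist_earlier[OF assms(1,2)] assms(4) by simp
qed

lemma card_sep_event_times_le_packing_number:
  assumes "r > 0" "nn_process X Xt" "finite S" "\<forall>n\<in>S. sep_event X Xt U r n"
  shows "of_nat (card S) \<le> packing_number r U"
proof -
  have sep_dist: "r \<le> dist (X m) (X n)" if "m \<in> S" "n \<in> S" "m \<noteq> n" for m n
    using nn_process_sep_event_times_dist[OF assms(2)] assms(4) that by blast
  have "inj_on X S"
  proof (rule inj_onI)
    fix m n assume "m \<in> S" "n \<in> S" "X m = X n"
    then show "m = n"
      using sep_dist[of m n] assms(1) by fastforce
  qed
  then have "card (X ` S) = card S"
    by (rule card_image)
  moreover have "r_packing r (X ` S)"
    unfolding r_packing_def using sep_dist by auto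
  moreover have "X ` S \<subseteq> U"
    using assms(4) unfolding sep_event_def by auto
  ultimately show ?thesis
    using finite_r_packing_le_packing_number[of "X ` S" U r] assms(3) by simp
qed

theorem lemma4:
  fixes X Xt :: "nat \<Rightarrow> 'a::metric_space" and U :: "'a set" and r :: real
  assumes "r > 0" and "nn_process X Xt"
  shows "(\<Sum>n. (of_bool (sep_event X Xt U r (Suc n)) :: ennreal)) \<le> packing_number r U"
proof (rule suminf_le_const)
  show "summable (\<lambda>n. (of_bool (sep_event X Xt U r (Suc n)) :: ennreal))"
    by simp
  fix N
  define F where "F = {..<N} \<inter> {n. sep_event X Xt U r (Suc n)}"
  have "card (Suc ` F) = card F"
    by (simp add: card_image)
  moreover have "of_nat (card (Suc ` F)) \<le> packing_number r U"
    by (rule card_sep_event_times_le_packing_number) (use assms F_def in auto)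
  ultimately show "(\<Sum>n<N. (of_bool (sep_event X Xt U r (Suc n)) :: ennreal)) \<le> packing_number r U"
    by (simp add: F_def)
qed

end
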